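(* For all integers $u\ge 4$, $$3\,C_{24}^{(3\cdot 2^u)}\equiv C_0+2^{u-2}C_1 \pmod{2^u},$$ where $C_0=\mathrm{Circ}(2,0,0,0,0,0,0,0,-1,0,0,0,0,0,0,0,-1,0,0,0,0,0,0,0)$ and $C_1=\mathrm{Circ}(2,0,2,0,1,0,2,0,1,0,0,0,2,0,0,0,1,0,2,0,1,0,2,0)$.
   Context: For integers $k,i\ge0$, $C_k^{(i)}$ is the $k\times k$ integer matrix $\big(\sum_{\alpha\in\mathbb{Z}}\binom{i}{\alpha k+r-s}\big)_{1\le r,s\le k}$, with $\binom{a}{b}=0$ if $b<0$ or $b>a$. For a $k$-tuple $(u_0,\dots,u_{k-1})$, $\mathrm{Circ}(u_0,\dots,u_{k-1})$ is the $k\times k$ matrix whose $(r,s)$ entry is $u_{(s-r \bmod k)}$. Congruence of matrices is entrywise. *)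

theory Defs
  imports Main
begin

definition ibinom :: "nat \<Rightarrow> int \<Rightarrow> int" where
  "ibinom a b = (if b < 0 \<or> b > int a then 0 else int (a choose nat b))"

text \<open>Entry (r,s) (1 <= r,s <= k) of C_k^(i): sum over alpha in Z of binom(i, alpha k + r - s).
  For k >= 1 only finitely many alpha give a nonzero term; all of them satisfy |alpha| <= i + k,
  so the sum over Z equals the sum over that finite range.\<close>
definition Cmat :: "nat \<Rightarrow> nat \<Rightarrow> nat \<Rightarrow> nat \<Rightarrow> int" where
  "Cmat k i r s = (\<Sum>\<alpha>\<in>{-(int i + int k)..int i + int k}. ibinom i (\<alpha> * int k + int r - int s))"

definition Circ :: "int list \<Rightarrow> nat \<Rightarrow> nat \<Rightarrow> int" where
  "Circ us r s = us ! nat ((int s - int r) mod int (length us))"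

definition C0list :: "int list" where
  "C0list = [2,0,0,0,0,0,0,0,-1,0,0,0,0,0,0,0,-1,0,0,0,0,0,0,0]"

definition C1list :: "int list" where
  "C1list = [2,0,2,0,1,0,2,0,1,0,0,0,2,0,0,0,1,0,2,0,1,0,2,0]"

end

theory Submission
  imports Defs "HOL-Number_Theory.Cong"
begin

(* C_k^(i) is the matrix of (1 + P)^i for the cyclic shift P, so its (r,s) entry only depends on
   r - s mod k; as a function of that residue it is the folded binomial row cyclic_binomial k i,
   and matrix products become cyclic convolutions. The case u = 4 is a finite computation.
   For the step, write 3 C^(n) = C0 + 2^(u-2) C1 + 2^u E and square: since C0 C0 = 3 C0,
   C0 C1 = 3 C1 (mod 4) and C1 C1 = 0 (mod 2), everything beyond 3 (C0 + 2^(u-1) C1) in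
   9 C^(2n) is divisible by 2^(u+1), and 3 is a unit modulo 2^(u+1).
   Both lists are symmetric, which reconciles the convention of Circ (entry u_(s-r)) with the
   entries of C_k^(i), which depend on r - s. *)

lemma Suc_mod_eq_iff:
  assumes "0 < k"
  shows "Suc j mod k = x mod k \<longleftrightarrow> j mod k = (x + (k - 1)) mod k"
proof -
  have "x mod k = (x + (k - 1) + 1) mod k" using assms by simp
  then show ?thesis using cong_add_rcancel_nat[of j 1 "x + (k - 1)" k] by (simp add: cong_def)
qed

lemma int_mod_add_diff:
  fixes x e k :: nat
  assumes "e \<le> k"
  shows "int ((x + k - e) mod k) = (int x - int e) mod int k"
proof -
  have "int ((x + k - e) mod k) = (int x - int e + int k) mod int k"
    using assms by (simp add: of_nat_mod algebra_simps)
  then show ?thesis by simp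
qed

lemma mod_diff_mod_diff:
  fixes x e k :: nat
  assumes "e < k"
  shows "(x + k - (x + k - e) mod k) mod k = e"
proof -
  have "int ((x + k - (x + k - e) mod k) mod k) = (int x - (int x - int e) mod int k) mod int k"
    using assms by (simp add: int_mod_add_diff less_imp_le)
  also have "\<dots> = int e"
    using assms by (simp add: mod_diff_right_eq)
  finally show ?thesis by linarith
qed

lemma mod_diff_eq_0_iff:
  fixes x e k :: nat
  assumes "e < k"
  shows "(x + k - e) mod k = 0 \<longleftrightarrow> e = x mod k"
proof -
  have "(x + k - e) mod k = 0 \<longleftrightarrow> (int x - int e) mod int k = 0"
    using assms by (metis int_mod_add_diff less_imp_le of_nat_eq_0_iff)
  also have "\<dots> \<longleftrightarrow> int x mod int k = int e mod int k"
    by (simp add: mod_eq_dvd_iff dvd_eq_mod_eq_0)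
  also have "\<dots> \<longleftrightarrow> e = x mod k"
    using assms by (metis mod_less of_nat_eq_iff zmod_int)
  finally show ?thesis .
qed

lemma mult_add_bounds:
  fixes q k t i :: int
  assumes "0 < k" and "\<bar>t\<bar> < k" and "0 \<le> q * k + t" and "q * k + t \<le> i"
  shows "0 \<le> q" and "q \<le> i + k"
proof -
  have "0 < (q + 1) * k"
    using assms by (simp add: algebra_simps)
  then show "0 \<le> q"
    using \<open>0 < k\<close> by (simp add: zero_less_mult_iff)
  then have "q * 1 \<le> q * k"
    using \<open>0 < k\<close> by (intro mult_left_mono) auto
  then show "q \<le> i + k"
    using assms by simp
qed

definition cyclic_binomial :: "nat \<Rightarrow> nat \<Rightarrow> nat \<Rightarrow> int" where
  "cyclic_binomial k n x = (\<Sum>j\<le>n. if j mod k = x mod k then int (n choose j) else 0)"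

definition cyclic_conv :: "nat \<Rightarrow> (nat \<Rightarrow> int) \<Rightarrow> (nat \<Rightarrow> int) \<Rightarrow> nat \<Rightarrow> int" where
  "cyclic_conv k f g x = (\<Sum>e<k. f e * g ((x + k - e) mod k))"

definition cyclic_nth :: "'a list \<Rightarrow> nat \<Rightarrow> 'a" where
  "cyclic_nth xs x = xs ! (x mod length xs)"

definition pascal_step :: "int list \<Rightarrow> int list" where
  "pascal_step xs = map2 (+) xs (rotate (length xs - 1) xs)"

fun folded_pascal_row :: "nat \<Rightarrow> nat \<Rightarrow> int list" where
  "folded_pascal_row k 0 = 1 # replicate (k - 1) 0"
| "folded_pascal_row k (Suc n) = pascal_step (folded_pascal_row k n)"

lemma cyclic_binomial_mod [simp]: "cyclic_binomial k n (x mod k) = cyclic_binomial k n x"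
  by (simp add: cyclic_binomial_def)

lemma cyclic_binomial_0: "cyclic_binomial k 0 x = (if x mod k = 0 then 1 else 0)"
  by (auto simp: cyclic_binomial_def)

lemma cyclic_binomial_Suc:
  assumes "0 < k"
  shows "cyclic_binomial k (Suc n) x = cyclic_binomial k n x + cyclic_binomial k n (x + (k - 1))"
proof -
  define f where "f j = (if j mod k = x mod k then int (n choose j) else 0)" for j
  have "cyclic_binomial k (Suc n) x =
      (\<Sum>j\<le>n. if Suc j mod k = x mod k then int (n choose j) else 0)
      + (f 0 + (\<Sum>j\<le>n. f (Suc j)))"
    unfolding cyclic_binomial_def f_def
    by (subst sum.atMost_Suc_shift) (auto simp: sum.distrib[symmetric] intro!: sum.cong)
  also have "(\<Sum>j\<le>n. if Suc j mod k = x mod k then int (n choose j) else 0) =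
      cyclic_binomial k n (x + (k - 1))"
    unfolding cyclic_binomial_def by (simp add: Suc_mod_eq_iff[OF assms])
  also have "f 0 + (\<Sum>j\<le>n. f (Suc j)) = cyclic_binomial k n x"
    unfolding sum.atMost_Suc_shift[symmetric] by (simp add: cyclic_binomial_def f_def)
  finally show ?thesis by simp
qed

lemma cyclic_conv_mod [simp]: "cyclic_conv k f g (x mod k) = cyclic_conv k f g x"
  unfolding cyclic_conv_def
proof (intro sum.cong refl)
  fix e assume "e \<in> {..<k}"
  then have "x mod k + k - e = x mod k + (k - e)" "x + k - e = x + (k - e)" by auto
  then show "f e * g ((x mod k + k - e) mod k) = f e * g ((x + k - e) mod k)"
    by (simp add: mod_add_left_eq)
qed

lemma cyclic_conv_commute: "cyclic_conv k f g x = cyclic_conv k g f x"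
  unfolding cyclic_conv_def
  by (rule sum.reindex_bij_witness[where i = "\<lambda>e. (x + k - e) mod k"
        and j = "\<lambda>e. (x + k - e) mod k"])
    (auto simp: mod_diff_mod_diff mult.commute)

lemma cyclic_conv_add_left:
  "cyclic_conv k (\<lambda>y. f y + g y) h x = cyclic_conv k f h x + cyclic_conv k g h x"
  by (simp add: cyclic_conv_def distrib_right sum.distrib)

lemma cyclic_conv_add_right:
  "cyclic_conv k f (\<lambda>y. g y + h y) x = cyclic_conv k f g x + cyclic_conv k f h x"
  by (simp add: cyclic_conv_def distrib_left sum.distrib)

lemma cyclic_conv_mult_left: "cyclic_conv k (\<lambda>y. c * f y) g x = c * cyclic_conv k f g x"
  by (simp add: cyclic_conv_def sum_distrib_left mult.assoc)

lemma cyclic_conv_mult_right: "cyclic_conv k f (\<lambda>y. c * g y) x = c * cyclic_conv k f g x"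
  by (simp add: cyclic_conv_def sum_distrib_left mult.left_commute)

lemma cyclic_conv_square_sum3:
  "cyclic_conv k (\<lambda>y. a y + p * b y + q * c y) (\<lambda>y. a y + p * b y + q * c y) x =
    cyclic_conv k a a x + 2 * p * cyclic_conv k a b x + p\<^sup>2 * cyclic_conv k b b x
    + 2 * q * cyclic_conv k a c x + 2 * p * q * cyclic_conv k b c x + q\<^sup>2 * cyclic_conv k c c x"
  unfolding cyclic_conv_add_left cyclic_conv_add_right cyclic_conv_mult_left cyclic_conv_mult_right
  by (simp add: cyclic_conv_commute[of k b a] cyclic_conv_commute[of k c a]
      cyclic_conv_commute[of k c b] algebra_simps power2_eq_square)

lemma cyclic_conv_shift:
  assumes "\<And>y. g (y mod k) = g y"
  shows "cyclic_conv k f g (x + d) = cyclic_conv k f (\<lambda>y. g (y + d)) x"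
  unfolding cyclic_conv_def
proof (intro sum.cong refl)
  fix e assume "e \<in> {..<k}"
  then have "x + d + k - e = (x + k - e) + d" by auto
  then have "(x + d + k - e) mod k = ((x + k - e) mod k + d) mod k"
    by (simp add: mod_add_left_eq)
  then show "f e * g ((x + d + k - e) mod k) = f e * g ((x + k - e) mod k + d)"
    by (metis assms)
qed

lemma cyclic_binomial_add:
  assumes "0 < k"
  shows "cyclic_binomial k (a + b) x = cyclic_conv k (cyclic_binomial k a) (cyclic_binomial k b) x"
proof (induction b arbitrary: x)
  case 0
  have "cyclic_conv k (cyclic_binomial k a) (cyclic_binomial k 0) x =
      (\<Sum>e<k. if e = x mod k then cyclic_binomial k a e else 0)"
    unfolding cyclic_conv_def cyclic_binomial_0 by (intro sum.cong refl) (simp add: mod_diff_eq_0_iff)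
  also have "\<dots> = cyclic_binomial k a x"
    using assms by simp
  finally show ?case by simp
next
  case (Suc b)
  have "cyclic_binomial k (a + Suc b) x = cyclic_conv k (cyclic_binomial k a) (cyclic_binomial k b) x
      + cyclic_conv k (cyclic_binomial k a) (cyclic_binomial k b) (x + (k - 1))"
    using Suc.IH by (simp add: cyclic_binomial_Suc[OF assms])
  also have "\<dots> = cyclic_conv k (cyclic_binomial k a)
      (\<lambda>y. cyclic_binomial k b y + cyclic_binomial k b (y + (k - 1))) x"
    by (simp add: cyclic_conv_shift cyclic_conv_add_right)
  also have "(\<lambda>y. cyclic_binomial k b y + cyclic_binomial k b (y + (k - 1))) =
      cyclic_binomial k (Suc b)"
    by (simp add: fun_eq_iff cyclic_binomial_Suc[OF assms])
  finally show ?case .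
qed

lemma cyclic_nth_mod_eq: "length xs = k \<Longrightarrow> cyclic_nth xs (x mod k) = cyclic_nth xs x"
  by (simp add: cyclic_nth_def)

lemma length_pascal_step [simp]: "length (pascal_step xs) = length xs"
  by (simp add: pascal_step_def)

lemma length_folded_pascal_row [simp]: "0 < k \<Longrightarrow> length (folded_pascal_row k n) = k"
  by (induction n) simp_all

lemma cyclic_binomial_eq_folded_pascal_row:
  assumes "0 < k"
  shows "cyclic_binomial k n x = cyclic_nth (folded_pascal_row k n) x"
proof (induction n arbitrary: x)
  case 0
  have "x mod k < k" using assms by simp
  then show ?case by (cases "x mod k") (auto simp: cyclic_binomial_0 cyclic_nth_def)
next
  case (Suc n)
  let ?row = "folded_pascal_row k n"
  have "cyclic_binomial k (Suc n) x = ?row ! (x mod k) + ?row ! ((x + (k - 1)) mod k)"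
    using Suc.IH assms by (simp add: cyclic_binomial_Suc cyclic_nth_def)
  also have "(x + (k - 1)) mod k = (x mod k + (k - 1)) mod k"
    by (simp add: mod_add_left_eq)
  also have "?row ! (x mod k) + ?row ! \<dots> = pascal_step ?row ! (x mod k)"
    using assms by (simp add: pascal_step_def nth_rotate ac_simps)
  finally show ?case
    using assms by (simp add: cyclic_nth_def)
qed

lemma Cmat_eq_cyclic_binomial:
  assumes r: "r \<in> {1..k}" and s: "s \<in> {1..k}"
  shows "Cmat k i r s = cyclic_binomial k i (r + k - s)"
proof -
  define t where "t = int r - int s"
  have t: "- int k < t" "t < int k" using r s unfolding t_def by auto
  have residue: "j mod k = (r + k - s) mod k \<longleftrightarrow> int k dvd int j - t" for j
  proof -
    have "int ((r + k - s) mod k) = t mod int k"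
      using s unfolding t_def by (simp add: int_mod_add_diff)
    then show ?thesis
      by (metis mod_eq_dvd_iff of_nat_eq_iff zmod_int)
  qed
  let ?T = "{-(int i + int k)..int i + int k}"
  let ?S = "{a \<in> ?T. 0 \<le> a * int k + t \<and> a * int k + t \<le> int i}"
  let ?J = "{j \<in> {..i}. j mod k = (r + k - s) mod k}"
  have "Cmat k i r s = (\<Sum>a\<in>?T. ibinom i (a * int k + t))"
    unfolding Cmat_def t_def by (simp add: algebra_simps)
  also have "\<dots> = (\<Sum>a\<in>?S. int (i choose nat (a * int k + t)))"
    by (rule sum.mono_neutral_cong_right) (auto simp: ibinom_def)
  also have "\<dots> = (\<Sum>j\<in>?J. int (i choose j))"
  proof (rule sum.reindex_bij_witness[where i = "\<lambda>j. (int j - t) div int k"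
        and j = "\<lambda>a. nat (a * int k + t)"])
    fix a assume a: "a \<in> ?S"
    then show "(int (nat (a * int k + t)) - t) div int k = a"
      using t by simp
    show "nat (a * int k + t) \<in> ?J"
      using a residue by auto
  next
    fix j assume j: "j \<in> ?J"
    then have "int k dvd int j - t" using residue by simp
    then obtain q where q: "int j - t = q * int k"
      by (metis dvd_def mult.commute)
    have "0 \<le> q" and "q \<le> int i + int k"
      using mult_add_bounds[of "int k" t q "int i"] q t j r by auto
    then show "(int j - t) div int k \<in> ?S"
      using q j t by auto
    show "nat ((int j - t) div int k * int k + t) = j"
      using q t by simp
  qed auto
  also have "\<dots> = cyclic_binomial k i (r + k - s)"
    unfolding cyclic_binomial_def by (rule sum.inter_filter) simp
  finally show ?thesis .
qed

lemma Circ_eq_cyclic_nth: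
  assumes "r \<in> {1..length xs}"
  shows "Circ xs r s = cyclic_nth xs (s + length xs - r)"
  using assms by (simp add: Circ_def cyclic_nth_def int_mod_add_diff[symmetric])

lemma Circ_commute:
  assumes reflect: "map (cyclic_nth xs) (map (\<lambda>y. length xs - y) [0..<length xs]) = xs"
    and r: "r \<in> {1..length xs}" and s: "s \<in> {1..length xs}"
  shows "Circ xs r s = Circ xs s r"
proof -
  let ?n = "length xs"
  define z where "z = (r + ?n - s) mod ?n"
  have z: "z < ?n" using r unfolding z_def by (intro mod_less_divisor) auto
  have "int ((?n - z) mod ?n) = (- int z) mod int ?n"
    using int_mod_add_diff[of z ?n 0] z by simp
  also have "\<dots> = (int s - int r) mod int ?n"
    using s by (simp add: z_def int_mod_add_diff mod_minus_eq)
  also have "\<dots> = int ((s + ?n - r) mod ?n)"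
    using r by (simp add: int_mod_add_diff)
  finally have "(?n - z) mod ?n = (s + ?n - r) mod ?n" by simp
  then have "cyclic_nth xs (s + ?n - r) = cyclic_nth xs (?n - z)"
    by (simp add: cyclic_nth_def)
  also have "\<dots> = xs ! z"
    using arg_cong[OF reflect, of "\<lambda>l. l ! z"] z by simp
  also have "\<dots> = cyclic_nth xs (r + ?n - s)"
    by (simp add: z_def cyclic_nth_def)
  finally show ?thesis
    using r s by (simp add: Circ_eq_cyclic_nth)
qed

lemma cyclic_binomial_double_cong:
  fixes c0 c1 :: "nat \<Rightarrow> int"
  assumes "0 < k" and "4 \<le> u"
    and c0_c0: "\<And>x. cyclic_conv k c0 c0 x = 3 * c0 x"
    and c0_c1: "\<And>x. [cyclic_conv k c0 c1 x = 3 * c1 x] (mod 4)"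
    and c1_c1: "\<And>x. even (cyclic_conv k c1 c1 x)"
    and cong_n: "\<And>x. [3 * cyclic_binomial k n x = c0 x + 2 ^ (u - 2) * c1 x] (mod 2 ^ u)"
  shows "[3 * cyclic_binomial k (2 * n) x = c0 x + 2 ^ (u - 1) * c1 x] (mod 2 ^ Suc u)"
proof -
  obtain m where u: "u = m + 4"
    using \<open>4 \<le> u\<close> by (metis add.commute le_Suc_ex)
  define j :: int where "j = 2 ^ m"
  have pow: "(2::int) ^ (u - 2) = 4 * j" "(2::int) ^ u = 16 * j"
      "(2::int) ^ (u - 1) = 8 * j" "(2::int) ^ Suc u = 32 * j"
    unfolding u j_def by (simp_all add: power_add)
  define e where "e y = (3 * cyclic_binomial k n y - c0 y - 4 * j * c1 y) div (16 * j)" for y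
  have expand: "(\<lambda>y. 3 * cyclic_binomial k n y) = (\<lambda>y. c0 y + 4 * j * c1 y + 16 * j * e y)"
  proof
    fix y
    have "16 * j dvd 3 * cyclic_binomial k n y - c0 y - 4 * j * c1 y"
      using cong_n[of y] by (simp add: pow cong_iff_dvd_diff diff_diff_eq)
    then show "3 * cyclic_binomial k n y = c0 y + 4 * j * c1 y + 16 * j * e y"
      unfolding e_def by simp
  qed
  obtain w0 where w0: "cyclic_conv k c0 c1 x = 3 * c1 x + 4 * w0"
    using c0_c1[of x] by (metis cong_iff_dvd_diff dvd_def add_diff_cancel_left' diff_add_cancel)
  obtain w1 where w1: "cyclic_conv k c1 c1 x = 2 * w1"
    using c1_c1[of x] by (metis evenE)
  have "9 * cyclic_binomial k (2 * n) x =
      cyclic_conv k (\<lambda>y. 3 * cyclic_binomial k n y) (\<lambda>y. 3 * cyclic_binomial k n y) x"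
    by (simp add: cyclic_binomial_add[OF \<open>0 < k\<close>] mult_2 cyclic_conv_mult_left
        cyclic_conv_mult_right)
  also have "\<dots> = cyclic_conv k c0 c0 x + 8 * j * cyclic_conv k c0 c1 x
      + 16 * j\<^sup>2 * cyclic_conv k c1 c1 x + 32 * j * cyclic_conv k c0 e x
      + 128 * j\<^sup>2 * cyclic_conv k c1 e x + 256 * j\<^sup>2 * cyclic_conv k e e x"
    unfolding expand cyclic_conv_square_sum3 by (simp add: power_mult_distrib power2_eq_square)
  also have "\<dots> = 3 * c0 x + 24 * j * c1 x + 32 * j * (w0 + j * w1 + cyclic_conv k c0 e x
      + 4 * j * cyclic_conv k c1 e x + 8 * j * cyclic_conv k e e x)"
    unfolding c0_c0 w0 w1 by (simp add: algebra_simps power2_eq_square)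
  finally have "[3 * (3 * cyclic_binomial k (2 * n) x) = 3 * (c0 x + 8 * j * c1 x)] (mod 32 * j)"
    by (simp add: cong_iff_dvd_diff algebra_simps)
  moreover have "coprime 3 (32 * j)"
    unfolding pow(4)[symmetric] by simp
  ultimately show ?thesis
    unfolding pow(3,4) by (simp only: cong_mult_lcancel)
qed

lemma length_C0list [simp]: "length C0list = 24"
  and length_C1list [simp]: "length C1list = 24"
  by (simp_all add: C0list_def C1list_def)

(* The finite checks below apply the functions under map, so that code_simp only ever evaluates
   them at numerals; a pointwise statement over a bound variable makes it unfold the sums
   symbolically first, which is far too slow. *)

lemma Circ_C0list_commute:
  "r \<in> {1..24} \<Longrightarrow> s \<in> {1..24} \<Longrightarrow> Circ C0list r s = Circ C0list s r"
  by (rule Circ_commute) (simp_all, code_simp)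

lemma Circ_C1list_commute:
  "r \<in> {1..24} \<Longrightarrow> s \<in> {1..24} \<Longrightarrow> Circ C1list r s = Circ C1list s r"
  by (rule Circ_commute) (simp_all, code_simp)

lemma cyclic_conv_C0list_C0list:
  "cyclic_conv 24 (cyclic_nth C0list) (cyclic_nth C0list) x = 3 * cyclic_nth C0list x"
proof -
  have "list_all2 (\<lambda>a b. a = 3 * b)
      (map (cyclic_conv 24 (cyclic_nth C0list) (cyclic_nth C0list)) [0..<24])
      (map (cyclic_nth C0list) [0..<24])"
    by code_simp
  then have "\<forall>y<24. cyclic_conv 24 (cyclic_nth C0list) (cyclic_nth C0list) y = 3 * cyclic_nth C0list y"
    by (simp add: list_all2_conv_all_nth)
  from this[rule_format, of "x mod 24"] show ?thesis
    by (simp add: cyclic_nth_mod_eq)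
qed

lemma cyclic_conv_C0list_C1list:
  "[cyclic_conv 24 (cyclic_nth C0list) (cyclic_nth C1list) x = 3 * cyclic_nth C1list x] (mod 4)"
proof -
  have "list_all2 (\<lambda>a b. [a = 3 * b] (mod 4))
      (map (cyclic_conv 24 (cyclic_nth C0list) (cyclic_nth C1list)) [0..<24])
      (map (cyclic_nth C1list) [0..<24])"
    by code_simp
  then have "\<forall>y<24.
      [cyclic_conv 24 (cyclic_nth C0list) (cyclic_nth C1list) y = 3 * cyclic_nth C1list y] (mod 4)"
    by (simp add: list_all2_conv_all_nth)
  from this[rule_format, of "x mod 24"] show ?thesis
    by (simp add: cyclic_nth_mod_eq)
qed

lemma cyclic_conv_C1list_C1list_even:
  "even (cyclic_conv 24 (cyclic_nth C1list) (cyclic_nth C1list) x)"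
proof -
  have "list_all even (map (cyclic_conv 24 (cyclic_nth C1list) (cyclic_nth C1list)) [0..<24])"
    by code_simp
  then have "\<forall>y<24. even (cyclic_conv 24 (cyclic_nth C1list) (cyclic_nth C1list) y)"
    by (simp add: list_all_length)
  from this[rule_format, of "x mod 24"] show ?thesis
    by simp
qed

lemma cyclic_binomial_48_cong:
  "[3 * cyclic_binomial 24 48 x = cyclic_nth C0list x + 4 * cyclic_nth C1list x] (mod 16)"
proof -
  have "list_all2 (\<lambda>a b. [3 * a = b] (mod 16)) (folded_pascal_row 24 48)
      (map2 (\<lambda>c d. c + 4 * d) C0list C1list)"
    by code_simp
  then show ?thesis
    by (simp add: list_all2_conv_all_nth cyclic_binomial_eq_folded_pascal_row cyclic_nth_def)
qed

lemma cyclic_binomial_24_cong: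
  assumes "4 \<le> u"
  shows "[3 * cyclic_binomial 24 (3 * 2 ^ u) x =
      cyclic_nth C0list x + 2 ^ (u - 2) * cyclic_nth C1list x] (mod 2 ^ u)"
  using assms
proof (induction u arbitrary: x rule: dec_induct)
  case base
  show ?case using cyclic_binomial_48_cong by simp
next
  case (step u)
  have "3 * 2 ^ Suc u = 2 * (3 * 2 ^ u :: nat)" by simp
  with cyclic_binomial_double_cong[OF _ step.hyps(1) cyclic_conv_C0list_C0list
      cyclic_conv_C0list_C1list cyclic_conv_C1list_C1list_even step.IH]
  show ?case by simp
qed

theorem theorem8:
  fixes u :: nat
  assumes "u \<ge> 4"
  shows "\<forall>r\<in>{1..24}. \<forall>s\<in>{1..24}.
           (3 * Cmat 24 (3 * 2 ^ u) r s) mod (2 ^ u) =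
           (Circ C0list r s + 2 ^ (u - 2) * Circ C1list r s) mod (2 ^ u)"
proof (intro ballI)
  fix r s :: nat
  assume r: "r \<in> {1..24}" and s: "s \<in> {1..24}"
  have "Circ C0list r s = cyclic_nth C0list (r + 24 - s)"
    and "Circ C1list r s = cyclic_nth C1list (r + 24 - s)"
    using Circ_C0list_commute[OF r s] Circ_C1list_commute[OF r s] Circ_eq_cyclic_nth[of s _ r] s
    by simp_all
  with Cmat_eq_cyclic_binomial[OF r s] cyclic_binomial_24_cong[OF assms, of "r + 24 - s"]
  show "(3 * Cmat 24 (3 * 2 ^ u) r s) mod (2 ^ u) =
      (Circ C0list r s + 2 ^ (u - 2) * Circ C1list r s) mod (2 ^ u)"
    by (simp add: cong_def)
qed

end
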